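(* Let $\{M_j\}$ be a collection of hermitian $n\times n$ matrices. A nontrivial subspace $V\subset\mathbb{C}^n$ is minimal with respect to $\mathrm{Span}_{\mathbb{R}}\{M_j\}$ if and only if there exists a positive semi-definite hermitian $n\times n$ matrix $N$, unique up to multiplication by a positive scalar, such that the range of $N$ equals $V$ and $\langle M_j,N\rangle=0$ for all $j$.
   Context: The real inner product on hermitian $n\times n$ matrices is $\langle A,B\rangle=\mathrm{Tr}(AB)$. For a hermitian matrix $M$ and a subspace $V\subset\mathbb{C}^n$, the restriction of $M$ to $V$ is the restriction of the quadratic form $v\mapsto\bar v^TMv$ to $V$. $\mathrm{Span}_{\mathbb{R}}\{M_j\}$ is indefinite on a nontrivial subspace $V$ if no real linear combination of the $M_j$ is positive definite when restricted to $V$. A nontrivial subspace $V$ is minimal with respect to $\mathrm{Span}_{\mathbb{R}}\{M_j\}$ if $\mathrm{Span}_{\mathbb{R}}\{M_j\}$ is indefinite on $V$ but not indefinite on any nontrivial proper subspace of $V$. *)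

theory Defs
  imports "HOL-Analysis.Analysis"
begin

definition hermitian :: "complex^'n^'n \<Rightarrow> bool" where
  "hermitian A \<longleftrightarrow> (\<forall>i k. A $ i $ k = cnj (A $ k $ i))"

definition qform :: "complex^'n^'n \<Rightarrow> complex^'n \<Rightarrow> complex" where
  "qform A v = (\<Sum>i\<in>UNIV. \<Sum>k\<in>UNIV. cnj (v $ i) * A $ i $ k * v $ k)"

definition csubspace :: "(complex^'n) set \<Rightarrow> bool" where
  "csubspace V \<longleftrightarrow> 0 \<in> V \<and> (\<forall>x\<in>V. \<forall>y\<in>V. x + y \<in> V) \<and> (\<forall>c. \<forall>x\<in>V. c *s x \<in> V)"

definition posdef_on :: "complex^'n^'n \<Rightarrow> (complex^'n) set \<Rightarrow> bool" where
  "posdef_on A V \<longleftrightarrow> (\<forall>v\<in>V. v \<noteq> 0 \<longrightarrow> Re (qform A v) > 0)"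

text \<open>Span_R{M_j} is indefinite on V: no real linear combination (element of the real span)
  is positive definite on V.\<close>
definition indefinite_on :: "(complex^'n^'n) set \<Rightarrow> (complex^'n) set \<Rightarrow> bool" where
  "indefinite_on Ms V \<longleftrightarrow> \<not> (\<exists>A\<in>span Ms. posdef_on A V)"

definition minimal_wrt :: "(complex^'n^'n) set \<Rightarrow> (complex^'n) set \<Rightarrow> bool" where
  "minimal_wrt Ms V \<longleftrightarrow> csubspace V \<and> V \<noteq> {0} \<and> indefinite_on Ms V \<and>
     (\<forall>W. csubspace W \<and> W \<noteq> {0} \<and> W \<subset> V \<longrightarrow> \<not> indefinite_on Ms W)"

definition psd :: "complex^'n^'n \<Rightarrow> bool" where
  "psd N \<longleftrightarrow> hermitian N \<and> (\<forall>v. Re (qform N v) \<ge> 0)"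

definition hinner :: "complex^'n^'n \<Rightarrow> complex^'n^'n \<Rightarrow> complex" where
  "hinner A B = trace (A ** B)"

end

theory Submission
  imports Defs
begin

(* Span_R{M_j} is indefinite on a subspace U iff there is a certificate: a nonzero psd matrix N
   with range inside U that is orthogonal to every M_j.  Such an N is a sum of outer products
   u u^* with u in U, so it pairs positively with any matrix that is positive definite on U.
   Conversely, if there is no certificate, the annihilator of the M_j misses the compact convex
   hull of the v v^* with v a unit vector of U; a separating functional then lies in
   Span_R{M_j} and is positive definite on U.

   For minimal V every certificate has range exactly V, and two of them N, N' are proportional:
   for t maximal with t N' <= N on V, the matrix N - t N' is psd, orthogonal to the M_j and has a
   kernel vector in V, so by minimality it vanishes.  Conversely, if the certificate N with range V is unique up
   to scaling and N_W is a certificate for a smaller W, then N + N_W has range V, so N_W is a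
   multiple of N and has range V, which is absurd. *)

section \<open>Separation in Euclidean spaces\<close>

lemma separating_hyperplane_subspace_compact:
  fixes S T :: "'a::euclidean_space set"
  assumes "subspace S" "convex T" "compact T" "S \<inter> T = {}"
  obtains a where "\<And>x. x \<in> S \<Longrightarrow> inner a x = 0" "\<And>x. x \<in> T \<Longrightarrow> inner a x > 0"
proof (cases "T = {}")
  case True
  then show ?thesis
    using that [of 0] by simp
next
  case False
  obtain a b where a: "\<forall>x\<in>S. inner a x < b" "\<forall>x\<in>T. b < inner a x"
    using separating_hyperplane_closed_compact [OF subspace_imp_convex closed_subspace assms(2,3) False
        assms(4)] assms(1) by blast
  have "b > 0"
    using a(1) subspace_0 [OF assms(1)] by force
  have "inner a x = 0" if "x \<in> S" for x
  proof (rule ccontr)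
    assume "inner a x \<noteq> 0"
    moreover have "((\<bar>b\<bar> + 1) / inner a x) *\<^sub>R x \<in> S"
      using assms(1) that by (simp add: subspace_scale)
    ultimately show False
      using a(1) by fastforce
  qed
  moreover have "inner a x > 0" if "x \<in> T" for x
    using a(2) that \<open>b > 0\<close> by fastforce
  ultimately show ?thesis
    using that by blast
qed

lemma in_span_if_orthogonal_to_annihilator:
  fixes a :: "'a::euclidean_space"
  assumes "\<And>x. (\<forall>m\<in>M. inner m x = 0) \<Longrightarrow> inner a x = 0"
  shows "a \<in> span M"
proof -
  obtain y z where yz: "y \<in> span M" "\<And>w. w \<in> span M \<Longrightarrow> orthogonal z w" "a = y + z"
    using orthogonal_subspace_decomp_exists [of M a] by blast
  have "inner a z = 0"
    using assms yz(2) span_base by (metis orthogonal_def inner_commute)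
  moreover have "inner y z = 0"
    using yz(1,2) by (simp add: orthogonal_def inner_commute)
  ultimately have "z = 0"
    by (simp add: yz(3) inner_add_left)
  then show ?thesis
    using yz by simp
qed

section \<open>Complex vectors and matrices\<close>

definition cinner :: "complex^'n \<Rightarrow> complex^'n \<Rightarrow> complex" where
  "cinner x y = (\<Sum>i\<in>UNIV. cnj (x $ i) * y $ i)"

lemma cinner_add_left: "cinner (x + y) z = cinner x z + cinner y z"
  unfolding cinner_def by (simp add: distrib_right sum.distrib)

lemma cinner_add_right: "cinner x (y + z) = cinner x y + cinner x z"
  unfolding cinner_def by (simp add: distrib_left sum.distrib)

lemma cinner_diff_left: "cinner (x - y) z = cinner x z - cinner y z"
  unfolding cinner_def by (simp add: left_diff_distrib sum_subtractf)

lemma cinner_diff_right: "cinner x (y - z) = cinner x y - cinner x z"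
  unfolding cinner_def by (simp add: right_diff_distrib sum_subtractf)

lemma cinner_scalar_left: "cinner (c *s x) y = cnj c * cinner x y"
  unfolding cinner_def by (simp add: sum_distrib_left mult.assoc)

lemma cinner_scalar_right: "cinner x (c *s y) = c * cinner x y"
  unfolding cinner_def by (simp add: sum_distrib_left mult.left_commute)

lemma scaleR_eq_scalar_mult: "c *\<^sub>R (x :: complex^'n) = complex_of_real c *s x"
  by (simp add: vec_eq_iff scaleR_conv_of_real [where 'a = complex])

lemma cinner_scaleR_left: "cinner (c *\<^sub>R x) y = of_real c * cinner x y"
  by (simp add: scaleR_eq_scalar_mult cinner_scalar_left)

lemma cinner_scaleR_right: "cinner x (c *\<^sub>R y) = of_real c * cinner x y"
  by (simp add: scaleR_eq_scalar_mult cinner_scalar_right)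

lemma cinner_zero_left [simp]: "cinner 0 x = 0"
  and cinner_zero_right [simp]: "cinner x 0 = 0"
  unfolding cinner_def by simp_all

lemma cnj_cinner: "cnj (cinner x y) = cinner y x"
  unfolding cinner_def by (simp add: mult.commute)

lemma Re_cinner: "Re (cinner x y) = inner x y"
  unfolding cinner_def inner_vec_def inner_complex_def by simp

lemma cinner_self: "cinner x x = of_real ((norm x)\<^sup>2)"
proof -
  have "cinner x x \<in> \<real>"
    by (metis Reals_cnj_iff cnj_cinner)
  then show ?thesis
    by (metis Re_cinner Reals_cases Re_complex_of_real power2_norm_eq_inner)
qed

lemma matrix_vector_mult_scaleR_right:
  fixes A :: "'a::real_algebra_1^'n^'m"
  shows "A *v (c *\<^sub>R x) = c *\<^sub>R (A *v x)"
  by (simp add: linear_scale)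

lemma matrix_vector_mult_scaleR_left:
  fixes A :: "'a::real_algebra_1^'n^'m"
  shows "(c *\<^sub>R A) *v x = c *\<^sub>R (A *v x)"
  unfolding matrix_vector_mult_def by (simp add: vec_eq_iff scaleR_sum_right)

lemma qform_eq_cinner: "qform A v = cinner v (A *v v)"
  unfolding qform_def cinner_def matrix_vector_mult_def
  by (simp add: sum_distrib_left mult.assoc)

lemma qform_zero_vec [simp]: "qform A 0 = 0"
  by (simp add: qform_eq_cinner)

lemma qform_add: "qform (A + B) v = qform A v + qform B v"
  by (simp add: qform_eq_cinner matrix_vector_mult_add_rdistrib cinner_add_right)

lemma qform_diff: "qform (A - B) v = qform A v - qform B v"
  by (simp add: qform_eq_cinner matrix_vector_mult_diff_rdistrib cinner_diff_right)

lemma qform_scaleR: "qform (c *\<^sub>R A) v = of_real c * qform A v"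
  by (simp add: qform_eq_cinner matrix_vector_mult_scaleR_left cinner_scaleR_right)

lemma qform_scaleR_vec: "qform A (c *\<^sub>R v) = of_real (c\<^sup>2) * qform A v"
  by (simp add: qform_eq_cinner matrix_vector_mult_scaleR_right cinner_scaleR_left
      cinner_scaleR_right power2_eq_square)

lemma hermitian_iff_cnj: "hermitian A \<longleftrightarrow> (\<forall>i k. cnj (A $ i $ k) = A $ k $ i)"
  unfolding hermitian_def by metis

lemma hermitian_add: "hermitian A \<Longrightarrow> hermitian B \<Longrightarrow> hermitian (A + B)"
  by (simp add: hermitian_iff_cnj)

lemma hermitian_diff: "hermitian A \<Longrightarrow> hermitian B \<Longrightarrow> hermitian (A - B)"
  by (simp add: hermitian_iff_cnj)

lemma hermitian_scaleR: "hermitian A \<Longrightarrow> hermitian (c *\<^sub>R A)"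
  by (simp add: hermitian_iff_cnj)

lemma hermitian_cinner:
  assumes "hermitian A"
  shows "cinner x (A *v y) = cinner (A *v x) y"
proof -
  have "cinner x (A *v y) = (\<Sum>i\<in>UNIV. \<Sum>k\<in>UNIV. cnj (x $ i) * A $ i $ k * y $ k)"
    unfolding cinner_def matrix_vector_mult_def by (simp add: sum_distrib_left mult.assoc)
  also have "\<dots> = (\<Sum>k\<in>UNIV. \<Sum>i\<in>UNIV. cnj (A $ k $ i * x $ i) * y $ k)"
    using assms by (subst sum.swap) (simp add: hermitian_iff_cnj mult.commute)
  also have "\<dots> = cinner (A *v x) y"
    unfolding cinner_def matrix_vector_mult_def by (simp add: sum_distrib_right)
  finally show ?thesis .
qed

lemma hermitian_qform_real: "hermitian A \<Longrightarrow> qform A v = of_real (Re (qform A v))"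
  unfolding qform_eq_cinner
  by (metis Reals_cnj_iff cnj_cinner hermitian_cinner of_real_Re)

definition outer :: "complex^'n \<Rightarrow> complex^'n^'n" where
  "outer v = (\<chi> i k. v $ i * cnj (v $ k))"

lemma outer_mult_vec: "outer v *v w = cinner v w *s v"
  unfolding outer_def matrix_vector_mult_def cinner_def
  by (simp add: vec_eq_iff sum_distrib_left sum_distrib_right mult_ac)

lemma outer_zero [simp]: "outer 0 = 0"
  by (simp add: outer_def vec_eq_iff)

lemma outer_scaleR: "outer (c *\<^sub>R v) = c\<^sup>2 *\<^sub>R outer v"
  unfolding outer_def by (simp add: vec_eq_iff scaleR_conv_of_real [where 'a = complex] power2_eq_square)

lemma continuous_on_outer: "continuous_on S outer"
  unfolding outer_def by (intro continuous_intros)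

lemma hermitian_outer: "hermitian (outer v)"
  unfolding hermitian_def outer_def by simp

lemma qform_outer: "qform (outer v) w = of_real ((cmod (cinner v w))\<^sup>2)"
proof -
  have "qform (outer v) w = cinner v w * cnj (cinner v w)"
    by (simp add: qform_eq_cinner outer_mult_vec cinner_scalar_right cnj_cinner mult.commute)
  then show ?thesis
    by (metis complex_norm_square)
qed

lemma inner_outer: "inner A (outer v) = Re (qform A v)"
  unfolding inner_vec_def inner_complex_def outer_def qform_def
  by (simp add: algebra_simps)

lemma continuous_on_Re_qform: "continuous_on S (\<lambda>v. Re (qform A v))"
proof -
  have "continuous_on S (\<lambda>v. inner A (outer v))"
    by (intro continuous_on_inner continuous_on_const continuous_on_outer)
  then show ?thesis
    by (simp add: inner_outer)
qed

lemma Re_trace_outer: "Re (trace (outer v)) = (norm v)\<^sup>2"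
  using arg_cong [OF cinner_self [of v], of Re]
  unfolding trace_def outer_def cinner_def by (simp add: mult.commute)

lemma Re_trace_scaleR: "Re (trace (c *\<^sub>R (A :: complex^'n^'n))) = c * Re (trace A)"
  by (simp add: trace_def sum_distrib_left)

lemma Re_hinner:
  assumes "hermitian M"
  shows "Re (hinner M N) = inner M N"
proof -
  have "inner M N = (\<Sum>i\<in>UNIV. \<Sum>k\<in>UNIV. Re (cnj (M $ i $ k) * N $ i $ k))"
    unfolding inner_vec_def inner_complex_def by simp
  also have "\<dots> = (\<Sum>i\<in>UNIV. \<Sum>k\<in>UNIV. Re (M $ k $ i * N $ i $ k))"
    using assms by (simp add: hermitian_iff_cnj)
  also have "\<dots> = (\<Sum>k\<in>UNIV. \<Sum>i\<in>UNIV. Re (M $ k $ i * N $ i $ k))"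
    by (rule sum.swap)
  also have "\<dots> = Re (hinner M N)"
    unfolding hinner_def trace_def matrix_matrix_mult_def by simp
  finally show ?thesis ..
qed

lemma hinner_eq_inner:
  assumes "hermitian M" "hermitian N"
  shows "hinner M N = of_real (inner M N)"
proof -
  have "cnj (hinner M N) = (\<Sum>i\<in>UNIV. \<Sum>k\<in>UNIV. M $ k $ i * N $ i $ k)"
    using assms unfolding hinner_def trace_def matrix_matrix_mult_def hermitian_iff_cnj by simp
  also have "\<dots> = (\<Sum>k\<in>UNIV. \<Sum>i\<in>UNIV. M $ k $ i * N $ i $ k)"
    by (rule sum.swap)
  also have "\<dots> = hinner M N"
    unfolding hinner_def trace_def matrix_matrix_mult_def by simp
  finally have "hinner M N \<in> \<real>"
    by (metis Reals_cnj_iff)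
  then show ?thesis
    using Re_hinner [OF assms(1)] by (metis of_real_Re)
qed

lemma subspace_hinner_annihilator:
  fixes Ms :: "(complex^'n^'n) set"
  shows "subspace {N. \<forall>M\<in>Ms. hinner M N = 0}"
proof -
  have "hinner M 0 = 0" "hinner M (A + B) = hinner M A + hinner M B"
    "hinner M (c *\<^sub>R A) = of_real c * hinner M A" for M A B :: "complex^'n^'n" and c
    unfolding hinner_def trace_def matrix_scalar_ac scalar_matrix_assoc [symmetric] matrix_add_ldistrib
    by (simp_all add: sum.distrib scaleR_conv_of_real [where 'a = complex] sum_distrib_left)
  then show ?thesis
    unfolding subspace_def by simp
qed

lemma csubspace_imp_subspace: "csubspace V \<Longrightarrow> subspace V"
  unfolding csubspace_def subspace_def by (simp add: scaleR_eq_scalar_mult)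

abbreviation col_space :: "complex^'n^'m \<Rightarrow> (complex^'m) set" where
  "col_space A \<equiv> range (\<lambda>v. A *v v)"

lemma subspace_col_space: "subspace (col_space (A :: complex^'n^'m))"
  using linear_subspace_image [OF matrix_vector_mul_linear subspace_UNIV] by (simp add: image_def)

lemma csubspace_col_space: "csubspace (col_space (A :: complex^'n^'m))"
  unfolding csubspace_def
  by (metis (no_types, lifting) matrix_vector_mult_0_right matrix_vector_right_distrib
      vector_scalar_commute rangeE rangeI)

lemma col_space_eq_zero_iff: "col_space A = {0} \<longleftrightarrow> A = 0"
  using matrix_eq [of A 0] by auto

lemma col_space_scaleR:
  assumes "c \<noteq> 0"
  shows "col_space (c *\<^sub>R A) = col_space (A :: complex^'n^'m)"
proof -
  have "(c *\<^sub>R A) *v v = A *v (c *\<^sub>R v)" "A *v v = (c *\<^sub>R A) *v ((1 / c) *\<^sub>R v)" for v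
    using assms by (simp_all add: matrix_vector_mult_scaleR_left matrix_vector_mult_scaleR_right)
  then show ?thesis
    by (metis (no_types, lifting) rangeE rangeI subsetI subset_antisym)
qed

lemma hermitian_kernel_if_orthogonal_col_space:
  assumes "hermitian N" "\<And>y. inner z (N *v y) = 0"
  shows "N *v z = 0"
proof -
  have "(norm (N *v z))\<^sup>2 = Re (cinner z (N *v (N *v z)))"
    by (simp add: hermitian_cinner [OF assms(1)] cinner_self)
  also have "\<dots> = 0"
    by (simp add: Re_cinner assms(2))
  finally show ?thesis
    by simp
qed

lemma hermitian_col_space_inter_kernel:
  assumes "hermitian N" "x \<in> col_space N" "N *v x = 0"
  shows "x = 0"
proof -
  obtain y where y: "x = N *v y"
    using assms(2) by blast
  have "(norm x)\<^sup>2 = Re (cinner y (N *v x))"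
    by (simp add: y hermitian_cinner [OF assms(1)] cinner_self)
  then show ?thesis
    by (simp add: assms(3))
qed

section \<open>Positive semidefinite matrices\<close>

lemma psd_imp_hermitian: "psd N \<Longrightarrow> hermitian N"
  unfolding psd_def by blast

lemma psd_qform_nonneg: "psd N \<Longrightarrow> 0 \<le> Re (qform N v)"
  unfolding psd_def by blast

lemma psd_add: "psd A \<Longrightarrow> psd B \<Longrightarrow> psd (A + B)"
  unfolding psd_def by (simp add: hermitian_add qform_add)

lemma psd_scaleR: "psd A \<Longrightarrow> 0 \<le> c \<Longrightarrow> psd (c *\<^sub>R A)"
  unfolding psd_def by (simp add: hermitian_scaleR qform_scaleR)

lemma psd_outer: "psd (outer v)"
  unfolding psd_def by (simp add: hermitian_outer qform_outer)

lemma psd_kernel_if_qform_zero: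
  assumes "psd N" "Re (qform N v) = 0"
  shows "N *v v = 0"
proof -
  define u where "u = N *v v"
  define a where "a = (norm u)\<^sup>2"
  define b where "b = Re (qform N u)"
  have "Re (qform N (v - s *\<^sub>R u)) = s\<^sup>2 * b - 2 * s * a" for s
  proof -
    have "cinner v (N *v u) = cinner u u"
      using hermitian_cinner [OF psd_imp_hermitian [OF assms(1)], of v u] by (simp add: u_def)
    then have "qform N (v - s *\<^sub>R u) = qform N v - 2 * of_real s * cinner u u + of_real (s\<^sup>2) * qform N u"
      unfolding qform_eq_cinner matrix_vector_mult_diff_distrib matrix_vector_mult_scaleR_right
        cinner_diff_left cinner_diff_right cinner_scaleR_left cinner_scaleR_right u_def [symmetric]
      by (simp add: power2_eq_square algebra_simps)
    then show ?thesis
      using assms(2) by (simp add: a_def b_def cinner_self)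
  qed
  then have nonneg: "0 \<le> s\<^sup>2 * b - 2 * s * a" for s
    by (metis assms(1) psd_qform_nonneg)
  have "a = 0"
  proof (rule ccontr)
    assume "a \<noteq> 0"
    then have "a > 0"
      by (simp add: a_def)
    define s where "s = a / (b + 1)"
    have "b \<ge> 0"
      using assms(1) b_def psd_qform_nonneg by blast
    then have "s > 0" "s * b < a"
      using \<open>a > 0\<close> by (simp_all add: s_def field_simps)
    have "s\<^sup>2 * b - 2 * s * a = s * (s * b - 2 * a)"
      by (simp add: power2_eq_square algebra_simps)
    also have "\<dots> < 0"
      using \<open>s > 0\<close> \<open>s * b < a\<close> \<open>a > 0\<close> by (simp add: mult_pos_neg)
    finally show False
      using nonneg [of s] by simp
  qed
  then show ?thesis
    by (simp add: a_def u_def)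
qed

lemma psd_qform_pos:
  assumes "psd N" "N *v v \<noteq> 0"
  shows "Re (qform N v) > 0"
  using psd_kernel_if_qform_zero [OF assms(1)] psd_qform_nonneg [OF assms(1), of v] assms(2)
  by (metis order_le_neq_trans)

lemma psd_qform_pos_on_col_space:
  assumes "psd N" "v \<in> col_space N" "v \<noteq> 0"
  shows "Re (qform N v) > 0"
  using hermitian_col_space_inter_kernel [OF psd_imp_hermitian [OF assms(1)] assms(2)] assms(3)
  by (metis assms(1) psd_qform_pos)

lemma psd_cauchy_schwarz:
  assumes "psd N"
  shows "(cmod (cinner (N *v w) x))\<^sup>2 \<le> Re (qform N w) * Re (qform N x)"
proof (cases "Re (qform N w) = 0")
  case True
  then show ?thesis
    using psd_kernel_if_qform_zero [OF assms] by simp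
next
  case False
  define \<alpha> where "\<alpha> = Re (qform N w)"
  define \<beta> where "\<beta> = cinner (N *v w) x"
  define l where "l = \<beta> / of_real \<alpha>"
  have "\<alpha> > 0"
    using False psd_qform_nonneg [OF assms] by (simp add: \<alpha>_def order_less_le)
  have herm: "hermitian N"
    using assms by (rule psd_imp_hermitian)
  have "cinner w (N *v x) = \<beta>" "cinner x (N *v w) = cnj \<beta>" "cinner w (N *v w) = of_real \<alpha>"
    using hermitian_qform_real [OF herm, of w]
    by (simp_all add: \<beta>_def \<alpha>_def hermitian_cinner [OF herm] cnj_cinner qform_eq_cinner)
  then have "qform N (x - l *s w) = qform N x - \<beta> * cnj \<beta> / of_real \<alpha>"
    unfolding qform_eq_cinner matrix_vector_mult_diff_distrib vector_scalar_commute
      cinner_diff_left cinner_diff_right cinner_scalar_left cinner_scalar_right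
    using \<open>\<alpha> > 0\<close> by (simp add: l_def field_simps)
  also have "\<beta> * cnj \<beta> = of_real ((cmod \<beta>)\<^sup>2)"
    by (simp only: complex_norm_square)
  also have "qform N x - of_real ((cmod \<beta>)\<^sup>2) / of_real \<alpha> = qform N x - of_real ((cmod \<beta>)\<^sup>2 / \<alpha>)"
    by simp
  finally have "0 \<le> Re (qform N x) - (cmod \<beta>)\<^sup>2 / \<alpha>"
    using psd_qform_nonneg [OF assms, of "x - l *s w"] by simp
  then show ?thesis
    using \<open>\<alpha> > 0\<close> by (simp add: \<alpha>_def \<beta>_def field_simps)
qed

lemma psd_rank_one_deflation:
  assumes "psd N" "N *v w \<noteq> 0"
  defines "D \<equiv> N - (1 / Re (qform N w)) *\<^sub>R outer (N *v w)"
  shows "psd D" "col_space D \<subseteq> col_space N" "N *v w \<notin> col_space D"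
proof -
  define \<alpha> where "\<alpha> = Re (qform N w)"
  define u where "u = N *v w"
  have herm: "hermitian N"
    using assms(1) by (rule psd_imp_hermitian)
  have "\<alpha> > 0"
    using psd_qform_pos [OF assms(1,2)] by (simp add: \<alpha>_def)
  have u_w: "cinner u w = of_real \<alpha>"
    using hermitian_qform_real [OF herm, of w]
    by (simp add: u_def \<alpha>_def hermitian_cinner [OF herm] qform_eq_cinner)
  have hermD: "hermitian D"
    unfolding D_def by (simp add: herm hermitian_diff hermitian_scaleR hermitian_outer)
  show "psd D"
    unfolding psd_def
  proof (intro conjI allI hermD)
    fix x
    have "(cmod (cinner u x))\<^sup>2 / \<alpha> \<le> Re (qform N x)"
      using psd_cauchy_schwarz [OF assms(1), of w x] \<open>\<alpha> > 0\<close>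
      by (simp add: u_def \<alpha>_def divide_le_eq mult.commute)
    moreover have "Re (qform D x) = Re (qform N x) - (cmod (cinner u x))\<^sup>2 / \<alpha>"
      by (simp add: D_def u_def \<alpha>_def qform_diff qform_scaleR qform_outer)
    ultimately show "0 \<le> Re (qform D x)"
      by linarith
  qed
  have D_mult: "D *v x = N *v (x - (cinner u x / of_real \<alpha>) *s w)" for x
    by (simp add: D_def u_def \<alpha>_def matrix_vector_mult_diff_rdistrib matrix_vector_mult_diff_distrib
        matrix_vector_mult_scaleR_left vector_scalar_commute outer_mult_vec scaleR_eq_scalar_mult)
  then show "col_space D \<subseteq> col_space N"
    by auto
  have "D *v w = 0"
    using \<open>\<alpha> > 0\<close> by (simp add: D_mult u_w u_def [symmetric])
  show "u \<notin> col_space D"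
  proof
    assume "u \<in> col_space D"
    then obtain y where "u = D *v y"
      by blast
    then have "cinner w u = 0"
      using hermitian_cinner [OF hermD, of w y] \<open>D *v w = 0\<close> by simp
    then show False
      using u_w \<open>\<alpha> > 0\<close> cnj_cinner [of w u] by simp
  qed
qed

lemma psd_eq_sum_outer:
  assumes "psd N"
  shows "\<exists>us. set us \<subseteq> col_space N \<and> N = sum_list (map outer us)"
  using assms
proof (induction "dim (col_space N)" arbitrary: N rule: less_induct)
  case less
  show ?case
  proof (cases "N = 0")
    case True
    then show ?thesis
      by (intro exI [of _ "[]"]) simp
  next
    case False
    then obtain w where w: "N *v w \<noteq> 0"
      using matrix_eq [of N 0] by auto
    define c where "c = 1 / Re (qform N w)"
    define D where "D = N - c *\<^sub>R outer (N *v w)"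
    note deflation = psd_rank_one_deflation [OF less.prems w, folded c_def, folded D_def]
    have "col_space D \<subset> col_space N"
      using deflation(2,3) by blast
    then have "dim (col_space D) < dim (col_space N)"
      by (metis eucl.dim_psubset span_eq_iff subspace_col_space)
    then obtain us where us: "set us \<subseteq> col_space D" "D = sum_list (map outer us)"
      using less.hyps deflation(1) by blast
    define u where "u = sqrt c *\<^sub>R (N *v w)"
    have "c > 0"
      using psd_qform_pos [OF less.prems w] by (simp add: c_def)
    then have "outer u = c *\<^sub>R outer (N *v w)"
      by (simp add: u_def outer_scaleR)
    then have "N = sum_list (map outer (u # us))"
      using us(2) by (simp add: D_def algebra_simps)
    moreover have "u \<in> col_space N"
      by (metis u_def matrix_vector_mult_scaleR_right rangeI)
    ultimately show ?thesis
      using us(1) deflation(2) by (intro exI [of _ "u # us"]) auto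
  qed
qed

lemma inner_sum_list_outer: "inner A (sum_list (map outer us)) = (\<Sum>u\<leftarrow>us. Re (qform A u))"
  by (induction us) (simp_all add: inner_add_right inner_outer)

lemma inner_pos_if_posdef_on:
  assumes "posdef_on A U" "psd N" "N \<noteq> 0" "col_space N \<subseteq> U"
  shows "inner A N > 0"
proof -
  obtain us where us: "set us \<subseteq> col_space N" "N = sum_list (map outer us)"
    using psd_eq_sum_outer [OF assms(2)] by blast
  have pos: "Re (qform A v) > 0" if "v \<in> set us" "v \<noteq> 0" for v
    using assms(1,4) us(1) that unfolding posdef_on_def by blast
  then have nonneg: "Re (qform A v) \<ge> 0" if "v \<in> set us" for v
    using that by (cases "v = 0") (auto intro: less_imp_le)
  have "\<exists>u\<in>set us. u \<noteq> 0"
  proof (rule ccontr)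
    assume "\<not> (\<exists>u\<in>set us. u \<noteq> 0)"
    then have "sum_list (map outer us) = 0"
      by (induction us) auto
    then show False
      using assms(3) us(2) by simp
  qed
  then obtain u where u: "u \<in> set us" "u \<noteq> 0"
    by blast
  have "0 < Re (qform A u)"
    using pos [OF u] .
  also have "\<dots> \<le> (\<Sum>v\<leftarrow>us. Re (qform A v))"
    using u(1) nonneg by (intro member_le_sum_list) auto
  also have "\<dots> = inner A N"
    by (simp add: us(2) inner_sum_list_outer)
  finally show ?thesis .
qed

lemma psd_if_qform_nonneg_on:
  assumes "hermitian A" "subspace V" "\<And>z. (\<And>v. v \<in> V \<Longrightarrow> inner z v = 0) \<Longrightarrow> A *v z = 0"
    "\<And>v. v \<in> V \<Longrightarrow> 0 \<le> Re (qform A v)"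
  shows "psd A"
  unfolding psd_def
proof (intro conjI allI assms(1))
  fix x
  obtain y z where yz: "y \<in> span V" "\<And>w. w \<in> span V \<Longrightarrow> orthogonal z w" "x = y + z"
    using orthogonal_subspace_decomp_exists [of V x] by blast
  have "y \<in> V"
    using yz(1) assms(2) by (metis span_eq_iff)
  have "A *v z = 0"
    using assms(3) yz(2) span_base by (metis orthogonal_def)
  then have "qform A x = qform A y"
    using hermitian_cinner [OF assms(1), of z y]
    by (simp add: qform_eq_cinner yz(3) matrix_vector_right_distrib cinner_add_left)
  then show "0 \<le> Re (qform A x)"
    using assms(4) \<open>y \<in> V\<close> by simp
qed

lemma col_space_add_psd:
  assumes "psd A" "psd B" "col_space B \<subseteq> col_space A"
  shows "col_space (A + B) = col_space A"
proof
  show sub: "col_space (A + B) \<subseteq> col_space A"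
    using assms(3) subspace_col_space [of A]
    by (auto simp: matrix_vector_mult_add_rdistrib intro: subspace_add)
  show "col_space A \<subseteq> col_space (A + B)"
  proof
    fix x assume "x \<in> col_space A"
    obtain y z where yz: "y \<in> col_space (A + B)" "\<And>w. w \<in> col_space (A + B) \<Longrightarrow> orthogonal z w"
        "x = y + z"
      using orthogonal_subspace_decomp_exists [of "col_space (A + B)" x]
      by (metis span_eq_iff subspace_col_space)
    have "(A + B) *v z = 0"
      using hermitian_kernel_if_orthogonal_col_space [OF hermitian_add] psd_imp_hermitian assms(1,2)
        yz(2) by (metis orthogonal_def rangeI)
    then have "Re (qform (A + B) z) = 0"
      by (simp add: qform_eq_cinner)
    then have "Re (qform A z) + Re (qform B z) = 0"
      by (simp add: qform_add)
    then have "A *v z = 0"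
      using psd_qform_nonneg assms(1,2) psd_kernel_if_qform_zero
      by (metis add_nonneg_eq_0_iff)
    moreover have "z \<in> col_space A"
      using \<open>x \<in> col_space A\<close> yz(1,3) sub subspace_col_space [of A]
      by (metis add_diff_cancel_left' subset_iff subspace_diff)
    ultimately have "z = 0"
      using hermitian_col_space_inter_kernel psd_imp_hermitian assms(1) by blast
    then show "x \<in> col_space (A + B)"
      using yz by simp
  qed
qed

lemma posdef_on_if_pos_on_sphere:
  assumes "subspace U" "\<And>v. v \<in> U \<inter> sphere 0 1 \<Longrightarrow> Re (qform A v) > 0"
  shows "posdef_on A U"
  unfolding posdef_on_def
proof (intro ballI impI)
  fix v assume "v \<in> U" "v \<noteq> 0"
  then have "(1 / norm v) *\<^sub>R v \<in> U \<inter> sphere 0 1"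
    using assms(1) by (simp add: subspace_scale)
  then have "0 < Re (qform A ((1 / norm v) *\<^sub>R v))"
    by (rule assms(2))
  then show "0 < Re (qform A v)"
    using \<open>v \<noteq> 0\<close> by (simp add: qform_scaleR_vec zero_less_mult_iff)
qed

lemma psd_diff_scaleR_if_qform_le:
  assumes "psd A" "psd B" "col_space A = V" "col_space B = V"
    "\<And>y. y \<in> V \<Longrightarrow> t * Re (qform B y) \<le> Re (qform A y)"
  shows "psd (A - t *\<^sub>R B)"
proof (rule psd_if_qform_nonneg_on [of _ V])
  show "hermitian (A - t *\<^sub>R B)"
    using assms(1,2) by (simp add: psd_imp_hermitian hermitian_diff hermitian_scaleR)
next
  show "subspace V"
    using assms(3) subspace_col_space by blast
next
  fix z assume "\<And>v. v \<in> V \<Longrightarrow> inner z v = 0"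
  then have "inner z (A *v y) = 0" "inner z (B *v y) = 0" for y
    using assms(3,4) by blast+
  then have "A *v z = 0" "B *v z = 0"
    using hermitian_kernel_if_orthogonal_col_space psd_imp_hermitian assms(1,2) by metis+
  then show "(A - t *\<^sub>R B) *v z = 0"
    by (simp add: matrix_vector_mult_diff_rdistrib matrix_vector_mult_scaleR_left)
next
  show "0 \<le> Re (qform (A - t *\<^sub>R B) v)" if "v \<in> V" for v
    using assms(5) [OF that] by (simp add: qform_diff qform_scaleR)
qed

lemma qform_ratio_minimum:
  assumes "subspace V" "V \<noteq> {0}" "posdef_on B V"
  obtains t x where "x \<in> V" "x \<noteq> 0" "Re (qform A x) = t * Re (qform B x)"
    "\<And>y. y \<in> V \<Longrightarrow> t * Re (qform B y) \<le> Re (qform A y)"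
proof -
  define S where "S = V \<inter> sphere 0 1"
  define f where "f v = Re (qform A v) / Re (qform B v)" for v
  have normalize: "(1 / norm v) *\<^sub>R v \<in> S" if "v \<in> V" "v \<noteq> 0" for v
    using assms(1) that by (simp add: S_def subspace_scale)
  have B_pos: "Re (qform B v) > 0" if "v \<in> S" for v
    using assms(3) that unfolding S_def posdef_on_def by auto
  have "compact S"
    unfolding S_def by (intro closed_Int_compact closed_subspace assms(1) compact_sphere)
  moreover have "S \<noteq> {}"
    using assms(2) normalize subspace_0 [OF assms(1)] by blast
  moreover have "continuous_on S f"
    unfolding f_def using B_pos
    by (intro continuous_on_divide continuous_on_Re_qform) (metis less_irrefl)
  ultimately obtain x where x: "x \<in> S" "\<And>v. v \<in> S \<Longrightarrow> f x \<le> f v"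
    using continuous_attains_inf [of S f] by blast
  have "f x * Re (qform B y) \<le> Re (qform A y)" if "y \<in> V" for y
  proof (cases "y = 0")
    case False
    define r where "r = norm y"
    define s where "s = (1 / r) *\<^sub>R y"
    have "s \<in> S"
      using normalize [OF that False] by (simp add: s_def r_def)
    then have "f x * Re (qform B s) \<le> Re (qform A s)"
      using x(2) B_pos by (simp add: f_def le_divide_eq)
    moreover have "y = r *\<^sub>R s"
      using False by (simp add: s_def r_def)
    ultimately show ?thesis
      by (simp add: qform_scaleR_vec mult.left_commute [of "f x"] mult_left_mono)
  qed simp
  moreover have "Re (qform A x) = f x * Re (qform B x)"
    using B_pos [OF x(1)] by (simp add: f_def)
  moreover have "x \<in> V" "x \<noteq> 0"
    using x(1) by (auto simp: S_def)
  ultimately show ?thesis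
    using that by blast
qed

section \<open>Certificates of indefiniteness\<close>

lemma convex_hull_outer_sphere:
  fixes U :: "(complex^'n) set"
  assumes "csubspace U" "N \<in> convex hull (outer ` (U \<inter> sphere 0 1))"
  shows "psd N" "Re (trace N) = 1" "col_space N \<subseteq> U"
proof -
  define P where "P = {N. psd N \<and> Re (trace N) = 1 \<and> col_space N \<subseteq> U}"
  have "convex P"
    unfolding convex_def P_def
  proof (intro ballI allI impI, elim CollectE conjE)
    fix x y :: "complex^'n^'n" and u v :: real
    assume x: "psd x" "Re (trace x) = 1" "col_space x \<subseteq> U"
      and y: "psd y" "Re (trace y) = 1" "col_space y \<subseteq> U"
      and uv: "0 \<le> u" "0 \<le> v" "u + v = 1"
    have "(u *\<^sub>R x + v *\<^sub>R y) *v w \<in> U" for w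
      using x(3) y(3) csubspace_imp_subspace [OF assms(1)]
      by (auto simp: matrix_vector_mult_add_rdistrib matrix_vector_mult_scaleR_left
          intro!: subspace_add subspace_scale)
    then show "u *\<^sub>R x + v *\<^sub>R y \<in> {N. psd N \<and> Re (trace N) = 1 \<and> col_space N \<subseteq> U}"
      using x(1,2) y(1,2) uv by (auto simp: psd_add psd_scaleR trace_add Re_trace_scaleR)
  qed
  moreover have "outer ` (U \<inter> sphere 0 1) \<subseteq> P"
    using assms(1) by (auto simp: P_def psd_outer Re_trace_outer outer_mult_vec csubspace_def)
  ultimately have "N \<in> P"
    using assms(2) hull_minimal by blast
  then show "psd N" "Re (trace N) = 1" "col_space N \<subseteq> U"
    unfolding P_def by blast+
qed

lemma certificate_imp_indefinite_on:
  assumes "\<forall>M\<in>Ms. hermitian M" "psd N" "N \<noteq> 0" "\<forall>M\<in>Ms. hinner M N = 0" "col_space N \<subseteq> U"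
  shows "indefinite_on Ms U"
  unfolding indefinite_on_def
proof
  assume "\<exists>A\<in>span Ms. posdef_on A U"
  then obtain A where A: "A \<in> span Ms" "posdef_on A U"
    by blast
  have "Ms \<subseteq> {A. inner A N = 0}"
    using assms(1,4) hinner_eq_inner [OF _ psd_imp_hermitian [OF assms(2)]] by fastforce
  then have "span Ms \<subseteq> {A. inner A N = 0}"
    by (rule span_minimal) (simp add: subspace_def inner_add_left)
  then have "inner A N = 0"
    using A(1) by blast
  then show False
    using inner_pos_if_posdef_on [OF A(2) assms(2,3,5)] by simp
qed

lemma indefinite_on_imp_certificate:
  assumes "\<forall>M\<in>Ms. hermitian M" "csubspace U" "U \<noteq> {0}" "indefinite_on Ms U"
  obtains N where "psd N" "N \<noteq> 0" "col_space N \<subseteq> U" "\<forall>M\<in>Ms. hinner M N = 0"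
proof -
  define S where "S = {X. \<forall>M\<in>Ms. inner M X = 0}"
  define T where "T = convex hull (outer ` (U \<inter> sphere 0 1))"
  have U: "subspace U"
    using assms(2) by (rule csubspace_imp_subspace)
  have "S \<inter> T \<noteq> {}"
  proof
    assume "S \<inter> T = {}"
    moreover have "subspace S"
      unfolding S_def subspace_def by (simp add: inner_add_right)
    moreover have "compact T"
      unfolding T_def
      by (intro compact_convex_hull compact_continuous_image closed_Int_compact
          continuous_on_outer closed_subspace U compact_sphere)
    ultimately obtain a where a: "\<And>X. X \<in> S \<Longrightarrow> inner a X = 0" "\<And>X. X \<in> T \<Longrightarrow> inner a X > 0"
      using separating_hyperplane_subspace_compact [of S T] unfolding T_def by blast
    have "a \<in> span Ms"
      using a(1) by (intro in_span_if_orthogonal_to_annihilator) (simp add: S_def)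
    moreover have "posdef_on a U"
    proof (rule posdef_on_if_pos_on_sphere [OF U])
      fix v assume "v \<in> U \<inter> sphere 0 1"
      then have "outer v \<in> T"
        unfolding T_def by (intro hull_inc imageI)
      then show "0 < Re (qform a v)"
        using a(2) inner_outer by metis
    qed
    ultimately show False
      using assms(4) unfolding indefinite_on_def by blast
  qed
  then obtain N where N: "N \<in> S" "psd N" "Re (trace N) = 1" "col_space N \<subseteq> U"
    using convex_hull_outer_sphere [OF assms(2)] unfolding T_def by blast
  moreover have "N \<noteq> 0"
    using N(3) by (auto simp: trace_def)
  moreover have "\<forall>M\<in>Ms. hinner M N = 0"
    using N(1,2) assms(1) hinner_eq_inner psd_imp_hermitian unfolding S_def by fastforce
  ultimately show ?thesis
    using that by blast
qed

section \<open>Minimal subspaces\<close>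

lemma minimal_wrt_certificate_col_space:
  assumes "minimal_wrt Ms V" "\<forall>M\<in>Ms. hermitian M"
    "psd N" "N \<noteq> 0" "\<forall>M\<in>Ms. hinner M N = 0" "col_space N \<subseteq> V"
  shows "col_space N = V"
proof (rule ccontr)
  assume "col_space N \<noteq> V"
  then have "col_space N \<subset> V"
    using assms(6) by blast
  moreover have "col_space N \<noteq> {0}"
    using assms(4) col_space_eq_zero_iff by blast
  moreover have "indefinite_on Ms (col_space N)"
    using certificate_imp_indefinite_on [OF assms(2-5) order_refl] .
  ultimately show False
    using assms(1) csubspace_col_space unfolding minimal_wrt_def by blast
qed

lemma minimal_wrt_imp_certificate:
  assumes "minimal_wrt Ms V" "\<forall>M\<in>Ms. hermitian M"
  obtains N where "psd N" "col_space N = V" "\<forall>M\<in>Ms. hinner M N = 0"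
proof -
  have "csubspace V" "V \<noteq> {0}" "indefinite_on Ms V"
    using assms(1) unfolding minimal_wrt_def by blast+
  then obtain N where "psd N" "N \<noteq> 0" "col_space N \<subseteq> V" "\<forall>M\<in>Ms. hinner M N = 0"
    using indefinite_on_imp_certificate assms(2) by blast
  then show ?thesis
    using minimal_wrt_certificate_col_space [OF assms] that by blast
qed

lemma minimal_wrt_certificate_unique:
  assumes min: "minimal_wrt Ms V" and herm: "\<forall>M\<in>Ms. hermitian M"
    and N: "psd N" "col_space N = V" "\<forall>M\<in>Ms. hinner M N = 0"
    and N': "psd N'" "col_space N' = V" "\<forall>M\<in>Ms. hinner M N' = 0"
  shows "\<exists>c>0. N' = c *\<^sub>R N"
proof -
  have V: "subspace V" "V \<noteq> {0}"
    using min csubspace_imp_subspace unfolding minimal_wrt_def by blast+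
  have "posdef_on N' V"
    using psd_qform_pos_on_col_space [OF N'(1)] N'(2) unfolding posdef_on_def by blast
  then obtain t x where x: "x \<in> V" "x \<noteq> 0" "Re (qform N x) = t * Re (qform N' x)"
    and t: "\<And>y. y \<in> V \<Longrightarrow> t * Re (qform N' y) \<le> Re (qform N y)"
    using qform_ratio_minimum [OF V] by blast
  have "t \<ge> 0"
    using x psd_qform_nonneg [OF N(1), of x] psd_qform_pos_on_col_space [OF N'(1), of x] N'(2)
    by (simp add: zero_le_mult_iff)
  \<comment> \<open>\<open>t N'\<close> is the largest multiple of \<open>N'\<close> below \<open>N\<close> on \<open>V\<close>, so \<open>N - t N'\<close> is psd
     and kills \<open>x \<in> V\<close>; by minimality it must vanish.\<close>
  define D where "D = N - t *\<^sub>R N'"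
  have "psd D"
    unfolding D_def using N(1) N'(1) N(2) N'(2) t by (rule psd_diff_scaleR_if_qform_le)
  have "Re (qform D x) = 0"
    using x(3) by (simp add: D_def qform_diff qform_scaleR)
  have "D = 0"
  proof (rule ccontr)
    assume "D \<noteq> 0"
    have "D \<in> {X. \<forall>M\<in>Ms. hinner M X = 0}"
      unfolding D_def using N(3) N'(3)
      by (intro subspace_diff subspace_scale subspace_hinner_annihilator) simp_all
    moreover have "D *v y \<in> V" for y
      unfolding D_def matrix_vector_mult_diff_rdistrib matrix_vector_mult_scaleR_left
      using N(2) N'(2) by (intro subspace_diff [OF V(1)] subspace_scale [OF V(1)]) blast+
    ultimately have "col_space D = V"
      using minimal_wrt_certificate_col_space [OF min herm \<open>psd D\<close> \<open>D \<noteq> 0\<close>] by auto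
    moreover have "D *v x = 0"
      using psd_kernel_if_qform_zero [OF \<open>psd D\<close> \<open>Re (qform D x) = 0\<close>] .
    ultimately show False
      using hermitian_col_space_inter_kernel [OF psd_imp_hermitian [OF \<open>psd D\<close>]] x(1,2) by blast
  qed
  then have "N = t *\<^sub>R N'"
    by (simp add: D_def)
  moreover have "N \<noteq> 0"
    using N(2) V(2) col_space_eq_zero_iff by blast
  ultimately have "t > 0"
    using \<open>t \<ge> 0\<close> by (cases "t = 0") auto
  then show ?thesis
    using \<open>N = t *\<^sub>R N'\<close> by (intro exI [of _ "1 / t"]) simp
qed

lemma unique_certificate_imp_minimal_wrt:
  assumes herm: "\<forall>M\<in>Ms. hermitian M" and V: "csubspace V" "V \<noteq> {0}"
    and N: "psd N" "col_space N = V" "\<forall>M\<in>Ms. hinner M N = 0"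
    and unique: "\<And>N'. psd N' \<Longrightarrow> col_space N' = V \<Longrightarrow> \<forall>M\<in>Ms. hinner M N' = 0 \<Longrightarrow>
      \<exists>c>0. N' = c *\<^sub>R N"
  shows "minimal_wrt Ms V"
proof -
  have "N \<noteq> 0"
    using N(2) V(2) col_space_eq_zero_iff by blast
  have "\<not> indefinite_on Ms W" if W: "csubspace W" "W \<noteq> {0}" "W \<subset> V" for W
  proof
    assume "indefinite_on Ms W"
    then obtain NW where NW: "psd NW" "NW \<noteq> 0" "col_space NW \<subseteq> W" "\<forall>M\<in>Ms. hinner M NW = 0"
      using indefinite_on_imp_certificate herm W(1,2) by blast
    have "col_space (N + NW) = V"
      using col_space_add_psd [OF N(1) NW(1)] NW(3) W(3) N(2) by blast
    moreover have "psd (N + NW)"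
      using N(1) NW(1) by (rule psd_add)
    moreover have "\<forall>M\<in>Ms. hinner M (N + NW) = 0"
      using subspace_add [OF subspace_hinner_annihilator] N(3) NW(4) by blast
    ultimately obtain c where "N + NW = c *\<^sub>R N"
      using unique by blast
    then have "NW = (c - 1) *\<^sub>R N"
      by (simp add: algebra_simps)
    moreover have "c \<noteq> 1"
      using NW(2) calculation by auto
    ultimately have "col_space NW = V"
      using col_space_scaleR [of "c - 1" N] N(2) by simp
    then show False
      using NW(3) W(3) by blast
  qed
  moreover have "indefinite_on Ms V"
    using certificate_imp_indefinite_on [OF herm N(1) \<open>N \<noteq> 0\<close> N(3)] N(2) by blast
  ultimately show ?thesis
    unfolding minimal_wrt_def using V by blast
qed

theorem mainTheorem9:
  fixes Ms :: "(complex^'n^'n) set" and V :: "(complex^'n) set"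
  assumes "\<forall>M\<in>Ms. hermitian M"
    and "csubspace V" and "V \<noteq> {0}"
  shows "minimal_wrt Ms V \<longleftrightarrow>
    (\<exists>N. psd N \<and> range (\<lambda>v. N *v v) = V \<and> (\<forall>M\<in>Ms. hinner M N = 0) \<and>
       (\<forall>N'. psd N' \<and> range (\<lambda>v. N' *v v) = V \<and> (\<forall>M\<in>Ms. hinner M N' = 0)
              \<longrightarrow> (\<exists>c::real. c > 0 \<and> N' = c *\<^sub>R N)))"
proof
  assume min: "minimal_wrt Ms V"
  obtain N where "psd N" "col_space N = V" "\<forall>M\<in>Ms. hinner M N = 0"
    using minimal_wrt_imp_certificate [OF min assms(1)] .
  with minimal_wrt_certificate_unique [OF min assms(1)]
  show "\<exists>N. psd N \<and> col_space N = V \<and> (\<forall>M\<in>Ms. hinner M N = 0) \<and>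
      (\<forall>N'. psd N' \<and> col_space N' = V \<and> (\<forall>M\<in>Ms. hinner M N' = 0) \<longrightarrow> (\<exists>c>0. N' = c *\<^sub>R N))"
    by blast
qed (use unique_certificate_imp_minimal_wrt [OF assms] in blast)

end
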